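(* Let $q$ be a power of the odd prime $p$ and let $f$ be a Dembowski–Ostrom polynomial over $\mathbb F_{q^2}$ such that $x\mapsto f(x)$ is a planar function on $\mathbb F_{q^2}$. Let $\kappa:\mathbb F_{q^2}\to\mathbb F_{q^2}$, $x\mapsto\bar x$, be an additive map with $\kappa(\kappa(x))=x$, $\overline{f(x)}=f(\bar x)$ and $\#\{y:y+\bar y=f(x+\bar x)\}=q$ for all $x\in\mathbb F_{q^2}$, and let $\mathcal U:=\{(x,y):y+\bar y=f(x+\bar x)\}\cup\{(\infty)\}$ be the corresponding unital of $\Pi(f)$. Let $\theta\in\mathbb F_{q^2}^*$ be such that for every $c\in\mathbb F_q$, $\#\{x\in\mathbb F_{q^2}:\theta_1f_0(x)-\theta_0f_1(x)=c\}$ equals $q+1$ if $c\neq0$ and $1$ if $c=0$, and let $\mathcal U_\theta:=\{(x,t\theta):x\in\mathbb F_{q^2},t\in\mathbb F_q\}\cup\{(\infty)\}$. Then $\mathcal U$ and $\mathcal U_\theta$ are not equivalent, i.e.\ no collineation of $\Pi(f)$ maps $\mathcal U_\theta$ onto $\mathcal U$.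
   Context: A Dembowski–Ostrom polynomial over $\mathbb F_{q^2}$ is one of the form $f(x)=\sum_{i,j}a_{ij}x^{p^i+p^j}$ with $a_{ij}\in\mathbb F_{q^2}$. A function $f$ on $\mathbb F_{q^2}$ is planar if $x\mapsto f(x+a)-f(x)$ is a bijection for every $a\neq0$. For planar $f$, $\Pi(f)$ is the projective plane with points $(x,y)\in\mathbb F_{q^2}^2$ and $(a)$ for $a\in\mathbb F_{q^2}\cup\{\infty\}$, lines $L_{a,b}=\{(x,f(x+a)-b):x\in\mathbb F_{q^2}\}\cup\{(a)\}$, $N_a=\{(a,y):y\in\mathbb F_{q^2}\}\cup\{(\infty)\}$ ($a,b\in\mathbb F_{q^2}$), $L_\infty=\{(a):a\in\mathbb F_{q^2}\cup\{\infty\}\}$; a collineation is a bijection of points mapping lines onto lines. A fixed $\xi\in\mathbb F_{q^2}\setminus\mathbb F_q$ is chosen; $\theta=\theta_0+\theta_1\xi$ and $f(x)=f_0(x)+f_1(x)\xi$ with components in $\mathbb F_q$. *)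

theory Defs
  imports Main "HOL-Computational_Algebra.Primes"
begin

text \<open>Points of the projective plane Pi(f): affine points (x,y) and points
  at infinity (a), a in F_{q^2} or infinity (None = infinity).\<close>
datatype 'a ppoint = Aff 'a 'a | Inf "'a option"

definition subfield_q :: "nat \<Rightarrow> ('a::field) set" where
  "subfield_q q = {x. x ^ q = x}"

definition DO_poly :: "nat \<Rightarrow> ('a::field \<Rightarrow> 'a) \<Rightarrow> bool" where
  "DO_poly p f \<longleftrightarrow> (\<exists>(a::nat \<Rightarrow> nat \<Rightarrow> 'a) N.
      \<forall>x. f x = (\<Sum>i<N. \<Sum>j<N. a i j * x ^ (p ^ i + p ^ j)))"

definition planar :: "('a::field \<Rightarrow> 'a) \<Rightarrow> bool" where
  "planar f \<longleftrightarrow> (\<forall>a. a \<noteq> 0 \<longrightarrow> bij (\<lambda>x. f (x + a) - f x))"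

definition line_L :: "('a::field \<Rightarrow> 'a) \<Rightarrow> 'a \<Rightarrow> 'a \<Rightarrow> 'a ppoint set" where
  "line_L f a b = {Aff x (f (x + a) - b) | x. True} \<union> {Inf (Some a)}"

definition line_N :: "'a \<Rightarrow> 'a ppoint set" where
  "line_N a = {Aff a y | y. True} \<union> {Inf None}"

definition line_inf :: "'a ppoint set" where
  "line_inf = range Inf"

definition plane_lines :: "('a::field \<Rightarrow> 'a) \<Rightarrow> 'a ppoint set set" where
  "plane_lines f = {line_L f a b | a b. True} \<union> {line_N a | a. True} \<union> {line_inf}"

definition collineation :: "('a::field \<Rightarrow> 'a) \<Rightarrow> ('a ppoint \<Rightarrow> 'a ppoint) \<Rightarrow> bool" where
  "collineation f \<phi> \<longleftrightarrow> bij \<phi> \<and> (\<lambda>L. \<phi> ` L) ` plane_lines f = plane_lines f"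

definition unital_U :: "('a::field \<Rightarrow> 'a) \<Rightarrow> ('a \<Rightarrow> 'a) \<Rightarrow> 'a ppoint set" where
  "unital_U f \<kappa> = {Aff x y | x y. y + \<kappa> y = f (x + \<kappa> x)} \<union> {Inf None}"

definition unital_U_theta :: "nat \<Rightarrow> 'a::field \<Rightarrow> 'a ppoint set" where
  "unital_U_theta q \<theta> = {Aff x (t * \<theta>) | x t. t \<in> subfield_q q} \<union> {Inf None}"

end

theory Submission
  imports Defs "HOL-Library.Cardinality"
begin

text \<open>Call a line of \<Pi>(f) a tangent of a point set S if it meets S in exactly one point.
  For the unital U, the tangent points seen from an affine point (u, v) lie on its polar line
  L(\<kappa> u, \<kappa> v): the reflection x \<mapsto> 2 \<kappa> a - x permutes the affine points of U on a line
  L(a, b), so a tangent touches U at the fixed point x = \<kappa> a.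
  For U_\<theta> this fails at every point (u, f w) with w \<noteq> 0: the points (u - x, f w - f x) for the
  q + 1 solutions x of \<theta>1 f0 x - \<theta>0 f1 x = \<theta>1 f0 w - \<theta>0 f1 w are tangent points, and planarity
  of the even function f forbids them to be collinear.
  Collineations preserve tangency and collinearity, so a collineation mapping U_\<theta> onto U would
  send all points (u, f w) with w \<noteq> 0, more than q^2 + 1 of them, into the line at infinity.\<close>

section \<open>The subfield F_q\<close>

lemma subfield_q_mult: "x \<in> subfield_q q \<Longrightarrow> y \<in> subfield_q q \<Longrightarrow> x * y \<in> subfield_q q"
  by (simp add: subfield_q_def power_mult_distrib)

lemma subfield_q_divide: "x \<in> subfield_q q \<Longrightarrow> y \<in> subfield_q q \<Longrightarrow> x / y \<in> subfield_q q"
  by (simp add: subfield_q_def power_divide)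

context
  fixes q k :: nat
  assumes prime_CHAR: "prime CHAR('a::field)" and q_eq: "q = CHAR('a) ^ k"
begin

lemma uminus_power_CHAR_power: "(- x :: 'a) ^ q = - (x ^ q)"
proof -
  have "q > 0" using q_eq prime_CHAR prime_gt_0_nat by simp
  then have "x ^ q + (- x) ^ q = 0"
    using freshmans_dream'[OF prime_CHAR q_eq, of x "- x"] by (simp add: power_0_left)
  then show ?thesis by (simp add: eq_neg_iff_add_eq_0 add.commute)
qed

lemma subfield_q_zero: "(0::'a) \<in> subfield_q q"
  using q_eq prime_CHAR prime_gt_0_nat by (simp add: subfield_q_def power_0_left)

lemma subfield_q_add: "x \<in> subfield_q q \<Longrightarrow> y \<in> subfield_q q \<Longrightarrow> (x + y :: 'a) \<in> subfield_q q"
  by (simp add: subfield_q_def freshmans_dream'[OF prime_CHAR q_eq])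

lemma subfield_q_uminus: "x \<in> subfield_q q \<Longrightarrow> (- x :: 'a) \<in> subfield_q q"
  by (simp add: subfield_q_def uminus_power_CHAR_power)

lemma subfield_q_diff: "x \<in> subfield_q q \<Longrightarrow> y \<in> subfield_q q \<Longrightarrow> (x - y :: 'a) \<in> subfield_q q"
  using subfield_q_add[of x "- y"] subfield_q_uminus[of y] by simp

lemma subfield_q_coordinates_unique:
  assumes "\<xi> \<notin> subfield_q q"
    and "a \<in> subfield_q q" "b \<in> subfield_q q" "c \<in> subfield_q q" "d \<in> subfield_q q"
    and "a + b * \<xi> = c + d * (\<xi> :: 'a)"
  shows "a = c" "b = d"
proof -
  have "b = d"
  proof (rule ccontr)
    assume "b \<noteq> d"
    then have "\<xi> = (c - a) / (b - d)" using assms(6) by (simp add: field_simps)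
    then have "\<xi> \<in> subfield_q q" using assms(2-5) by (simp add: subfield_q_divide subfield_q_diff)
    with assms(1) show False ..
  qed
  then show "a = c" "b = d" using assms(6) by simp_all
qed

lemma subfield_q_multiple_iff:
  assumes \<xi>: "\<xi> \<notin> subfield_q q"
    and ab: "a \<in> subfield_q q" "b \<in> subfield_q q"
    and \<theta>: "\<theta>0 \<in> subfield_q q" "\<theta>1 \<in> subfield_q q" "\<theta>0 + \<theta>1 * \<xi> \<noteq> 0"
  shows "(\<exists>s\<in>subfield_q q. a + b * \<xi> = s * (\<theta>0 + \<theta>1 * \<xi>)) \<longleftrightarrow> \<theta>1 * a = \<theta>0 * (b :: 'a)"
proof
  assume "\<exists>s\<in>subfield_q q. a + b * \<xi> = s * (\<theta>0 + \<theta>1 * \<xi>)"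
  then obtain s where s: "s \<in> subfield_q q" "a + b * \<xi> = s * (\<theta>0 + \<theta>1 * \<xi>)" ..
  then have "a + b * \<xi> = s * \<theta>0 + (s * \<theta>1) * \<xi>" by (simp add: algebra_simps)
  then have "a = s * \<theta>0" "b = s * \<theta>1"
    using subfield_q_coordinates_unique[OF \<xi> ab
        subfield_q_mult[OF s(1) \<theta>(1)] subfield_q_mult[OF s(1) \<theta>(2)]]
    by simp_all
  then show "\<theta>1 * a = \<theta>0 * b" by simp
next
  assume cross: "\<theta>1 * a = \<theta>0 * b"
  show "\<exists>s\<in>subfield_q q. a + b * \<xi> = s * (\<theta>0 + \<theta>1 * \<xi>)"
  proof (cases "\<theta>1 = 0")
    case True
    then have "\<theta>0 \<noteq> 0" "b = 0" using \<theta>(3) cross by auto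
    then have "a + b * \<xi> = a / \<theta>0 * (\<theta>0 + \<theta>1 * \<xi>)" using True by simp
    then show ?thesis using subfield_q_divide[OF ab(1) \<theta>(1)] by blast
  next
    case False
    then have "a + b * \<xi> = b / \<theta>1 * (\<theta>0 + \<theta>1 * \<xi>)" using cross by (simp add: field_simps)
    then show ?thesis using subfield_q_divide[OF ab(2) \<theta>(2)] by blast
  qed
qed

end

lemma CHAR_eq_prime:
  assumes "prime p" "of_nat p = (0::'a::{semiring_1,zero_neq_one})"
  shows "CHAR('a) = p"
proof -
  have "CHAR('a) dvd p" using assms(2) by (simp add: of_nat_eq_0_iff_char_dvd)
  then have "CHAR('a) = 1 \<or> CHAR('a) = p" using assms(1) prime_nat_iff by blast
  then show ?thesis by auto
qed

section \<open>Dembowski--Ostrom functions\<close>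

definition polar_form :: "('a::ab_group_add \<Rightarrow> 'a) \<Rightarrow> 'a \<Rightarrow> 'a \<Rightarrow> 'a" where
  "polar_form f x y = f (x + y) - f x - f y"

lemma polar_form_commute: "polar_form f x y = polar_form f y x"
  by (simp add: polar_form_def add.commute)

locale DO_function =
  fixes p :: nat and f :: "'a::field \<Rightarrow> 'a"
  assumes prime_p: "prime p" and odd_p: "odd p" and CHAR_eq: "CHAR('a) = p"
    and DO: "DO_poly p f"
begin

lemma frobenius_add: "(x + y :: 'a) ^ (p ^ i) = x ^ (p ^ i) + y ^ (p ^ i)"
  using freshmans_dream' prime_p CHAR_eq by blast

lemma two_neq_zero: "(2::'a) \<noteq> 0"
proof
  assume "(2::'a) = 0"
  then have "p dvd 2" using of_nat_eq_0_iff_char_dvd[where 'a='a, of 2] CHAR_eq by simp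
  then have "p \<le> 2" by (rule dvd_imp_le) simp
  then show False using prime_ge_2_nat[OF prime_p] odd_p by (simp add: le_antisym)
qed

lemma DO_expansion:
  obtains a :: "nat \<Rightarrow> nat \<Rightarrow> 'a" and N where
    "\<And>x. f x = (\<Sum>i<N. \<Sum>j<N. a i j * (x ^ (p ^ i) * x ^ (p ^ j)))"
  using DO that by (auto simp: DO_poly_def power_add)

lemma f_zero [simp]: "f 0 = 0"
proof -
  obtain a N where "\<And>x. f x = (\<Sum>i<N. \<Sum>j<N. a i j * (x ^ (p ^ i) * x ^ (p ^ j)))"
    using DO_expansion by blast
  then show ?thesis using prime_gt_0_nat[OF prime_p] by (simp add: power_0_left)
qed

lemma f_uminus [simp]: "f (- x) = f x"
proof -
  obtain a N where "\<And>x. f x = (\<Sum>i<N. \<Sum>j<N. a i j * (x ^ (p ^ i) * x ^ (p ^ j)))"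
    using DO_expansion by blast
  then show ?thesis using odd_p by simp
qed

lemma polar_form_expansion:
  obtains a :: "nat \<Rightarrow> nat \<Rightarrow> 'a" and N where "\<And>x y. polar_form f x y =
    (\<Sum>i<N. \<Sum>j<N. a i j * (x ^ (p ^ i) * y ^ (p ^ j) + y ^ (p ^ i) * x ^ (p ^ j)))"
proof -
  obtain a N where aN: "\<And>x. f x = (\<Sum>i<N. \<Sum>j<N. a i j * (x ^ (p ^ i) * x ^ (p ^ j)))"
    using DO_expansion by blast
  show ?thesis
    by (rule that[of a N])
       (simp add: polar_form_def aN frobenius_add algebra_simps sum.distrib sum_subtractf)
qed

lemma polar_form_add_left: "polar_form f (x + y) z = polar_form f x z + polar_form f y z"
proof -
  obtain a N where "\<And>x y. polar_form f x y =
      (\<Sum>i<N. \<Sum>j<N. a i j * (x ^ (p ^ i) * y ^ (p ^ j) + y ^ (p ^ i) * x ^ (p ^ j)))"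
    using polar_form_expansion by blast
  then show ?thesis by (simp add: frobenius_add algebra_simps sum.distrib)
qed

lemma polar_form_add_right: "polar_form f z (x + y) = polar_form f z x + polar_form f z y"
  by (simp only: polar_form_commute[of f z] polar_form_add_left)

lemma polar_form_diff_left: "polar_form f (x - y) z = polar_form f x z - polar_form f y z"
  using polar_form_add_left[of "x - y" y z] by simp

lemma polar_form_diff_right: "polar_form f z (x - y) = polar_form f z x - polar_form f z y"
  using polar_form_add_right[of z "x - y" y] by simp

lemma polar_form_double_left: "polar_form f (2 * x) y = 2 * polar_form f x y"
  by (simp only: mult_2 polar_form_add_left)

lemma polar_form_double_right: "polar_form f y (2 * x) = 2 * polar_form f y x"
  by (simp only: mult_2 polar_form_add_right)

end

lemma planar_even_centre:
  fixes f :: "'a::field \<Rightarrow> 'a"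
  assumes "planar f" "(2::'a) \<noteq> 0" "\<And>x. f (- x) = f x"
    and "f (c - x) = f (c + x)" "x \<noteq> 0"
  shows "c = 0"
proof -
  have "inj (\<lambda>y. f (y + 2 * x) - f y)"
    using assms(1,2,5) by (simp add: planar_def bij_is_inj)
  moreover have "f (c - x + 2 * x) - f (c - x) = f (- c - x + 2 * x) - f (- c - x)"
  proof -
    have e: "c - x + 2 * x = c + x" "- c - x + 2 * x = - (c - x)" "- c - x = - (c + x)"
      by algebra+
    have "f (- c - x + 2 * x) = f (c - x)" by (metis e(2) assms(3))
    moreover have "f (- c - x) = f (c + x)" by (metis e(3) assms(3))
    ultimately show ?thesis using e(1) assms(4) by (simp add: add.commute)
  qed
  ultimately have "c - x = - c - x" by (rule injD)
  then have "2 * c = 0" by algebra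
  then show ?thesis using assms(2) by simp
qed

lemma planar_even_eqD:
  fixes f :: "'a::field \<Rightarrow> 'a"
  assumes "planar f" "(2::'a) \<noteq> 0" "\<And>x. f (- x) = f x" and "f x = f y"
  shows "x = y \<or> x = - y"
proof -
  define c t where "c = (x + y) / 2" and "t = (x - y) / 2"
  have "2 * c = x + y" "2 * t = x - y"
    using assms(2) by (simp_all add: c_def t_def)
  then have x: "x = c + t" and y: "y = c - t"
    using assms(2) by algebra+
  have "t = 0 \<or> c = 0"
    using planar_even_centre[OF assms(1-3), of c t] assms(4) x y by auto
  then show ?thesis using x y by auto
qed

section \<open>Tangent points in \<Pi>(f)\<close>

lemma mem_line_L [simp]:
  "Aff x y \<in> line_L f a b \<longleftrightarrow> y = f (x + a) - b"
  "Inf s \<in> line_L f a b \<longleftrightarrow> s = Some a"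
  by (auto simp: line_L_def)

lemma mem_line_N [simp]:
  "Aff x y \<in> line_N a \<longleftrightarrow> x = a"
  "Inf s \<in> line_N a \<longleftrightarrow> s = None"
  by (auto simp: line_N_def)

lemma mem_line_inf [simp]: "Aff x y \<notin> line_inf" "Inf s \<in> line_inf"
  by (auto simp: line_inf_def)

lemma mem_unital_U [simp]:
  "Aff x y \<in> unital_U f \<kappa> \<longleftrightarrow> y + \<kappa> y = f (x + \<kappa> x)"
  "Inf s \<in> unital_U f \<kappa> \<longleftrightarrow> s = None"
  by (auto simp: unital_U_def)

lemma mem_unital_U_theta [simp]:
  "Aff x y \<in> unital_U_theta q \<theta> \<longleftrightarrow> (\<exists>t\<in>subfield_q q. y = t * \<theta>)"
  "Inf s \<in> unital_U_theta q \<theta> \<longleftrightarrow> s = None"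
  by (auto simp: unital_U_theta_def)

lemma line_L_in_plane_lines [simp]: "line_L f a b \<in> plane_lines f"
  by (auto simp: plane_lines_def)

lemma plane_linesE:
  assumes "m \<in> plane_lines f"
  obtains a b where "m = line_L f a b" | a where "m = line_N a" | "m = line_inf"
  using assms by (auto simp: plane_lines_def)

lemma card_line_inf: "card (line_inf :: 'a::finite ppoint set) = Suc CARD('a)"
  unfolding line_inf_def by (simp add: card_image inj_on_def)

definition tangent_points :: "('a::field \<Rightarrow> 'a) \<Rightarrow> 'a ppoint set \<Rightarrow> 'a ppoint \<Rightarrow> 'a ppoint set" where
  "tangent_points f S P = {Q. \<exists>m\<in>plane_lines f. P \<in> m \<and> m \<inter> S = {Q}}"

definition plane_collinear :: "('a::field \<Rightarrow> 'a) \<Rightarrow> 'a ppoint set \<Rightarrow> bool" where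
  "plane_collinear f X \<longleftrightarrow> (\<exists>l\<in>plane_lines f. X \<subseteq> l)"

lemma collineation_image_tangent_points:
  assumes "collineation f \<phi>"
  shows "\<phi> ` tangent_points f S P \<subseteq> tangent_points f (\<phi> ` S) (\<phi> P)"
proof
  fix R assume "R \<in> \<phi> ` tangent_points f S P"
  then obtain Q m where R: "R = \<phi> Q" and m: "m \<in> plane_lines f" "P \<in> m" "m \<inter> S = {Q}"
    unfolding tangent_points_def by blast
  have "inj \<phi>" using assms by (simp add: collineation_def bij_is_inj)
  then have "\<phi> ` m \<inter> \<phi> ` S = \<phi> ` (m \<inter> S)" by (rule image_Int[symmetric])
  then have "\<phi> ` m \<inter> \<phi> ` S = {\<phi> Q}" using m(3) by simp
  moreover have "\<phi> ` m \<in> plane_lines f" using assms m(1) unfolding collineation_def by blast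
  ultimately show "R \<in> tangent_points f (\<phi> ` S) (\<phi> P)"
    using R m(2) unfolding tangent_points_def by blast
qed

lemma collineation_collinear_imageD:
  assumes "collineation f \<phi>" "plane_collinear f (\<phi> ` X)"
  shows "plane_collinear f X"
proof -
  obtain l' where l': "l' \<in> plane_lines f" "\<phi> ` X \<subseteq> l'"
    using assms(2) unfolding plane_collinear_def by blast
  have lines: "(\<lambda>l. \<phi> ` l) ` plane_lines f = plane_lines f" and inj: "inj \<phi>"
    using assms(1) by (simp_all add: collineation_def bij_is_inj)
  obtain l where "l \<in> plane_lines f" "l' = \<phi> ` l"
    using l'(1) lines by blast
  moreover have "X \<subseteq> l"
    using l'(2) \<open>l' = \<phi> ` l\<close> inj by (simp add: inj_image_subset_iff)
  ultimately show ?thesis unfolding plane_collinear_def by blast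
qed

lemma collineation_to_line_inf:
  assumes "collineation f \<phi>" "\<phi> ` S = S'"
    and "\<And>u v. plane_collinear f (tangent_points f S' (Aff u v))"
    and "\<not> plane_collinear f (tangent_points f S P)"
  shows "\<phi> P \<in> line_inf"
proof (cases "\<phi> P")
  case (Aff u v)
  then have "plane_collinear f (\<phi> ` tangent_points f S P)"
    using assms(3)[of u v] collineation_image_tangent_points[OF assms(1), of S P] assms(2)
    by (auto simp: plane_collinear_def)
  then show ?thesis using collineation_collinear_imageD[OF assms(1)] assms(4) by blast
qed simp

lemma no_collineation_onto:
  fixes f :: "'a::{field,finite} \<Rightarrow> 'a"
  assumes "\<And>u v. plane_collinear f (tangent_points f S' (Aff u v))"
    and "\<And>P. P \<in> A \<Longrightarrow> \<not> plane_collinear f (tangent_points f S P)"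
    and "card A > Suc CARD('a)"
  shows "\<not> (\<exists>\<phi>. collineation f \<phi> \<and> \<phi> ` S = S')"
proof
  assume "\<exists>\<phi>. collineation f \<phi> \<and> \<phi> ` S = S'"
  then obtain \<phi> where \<phi>: "collineation f \<phi>" "\<phi> ` S = S'" by blast
  have "inj \<phi>" using \<phi>(1) by (simp add: collineation_def bij_is_inj)
  then have "card A = card (\<phi> ` A)" by (simp add: card_image inj_on_subset)
  also have "\<dots> \<le> card (line_inf :: 'a ppoint set)"
    using collineation_to_line_inf[OF \<phi> assms(1) assms(2)]
    by (intro card_mono) (auto simp: line_inf_def)
  finally show False using assms(3) by (simp add: card_line_inf)
qed

lemma card_Aff_two_rows:
  fixes y1 y2 :: "'a::finite"
  assumes "y1 \<noteq> y2"
  shows "card ((\<lambda>(u, y). Aff u y) ` (UNIV \<times> {y1, y2})) = 2 * CARD('a)"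
proof -
  have "inj_on (\<lambda>(u, y). Aff u y) (UNIV \<times> {y1, y2})" by (auto simp: inj_on_def)
  then show ?thesis using assms by (simp add: card_image card_cartesian_product)
qed

section \<open>The unital U\<close>

locale hermitian_DO = DO_function p f for p and f :: "'a::field \<Rightarrow> 'a" +
  fixes \<kappa> :: "'a \<Rightarrow> 'a"
  assumes kappa_add: "\<kappa> (x + y) = \<kappa> x + \<kappa> y"
    and kappa_kappa [simp]: "\<kappa> (\<kappa> x) = x"
    and kappa_f: "\<kappa> (f x) = f (\<kappa> x)"
    and unital_U_fibre: "\<exists>y. y + \<kappa> y = f (x + \<kappa> x)"
begin

lemma kappa_diff: "\<kappa> (x - y) = \<kappa> x - \<kappa> y"
  using kappa_add[of "x - y" y] by (simp add: algebra_simps)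

lemma kappa_double: "\<kappa> (2 * x) = 2 * \<kappa> x"
  by (simp only: mult_2 kappa_add)

lemma line_L_unital_U_reflect:
  assumes "Aff x (f (x + a) - b) \<in> unital_U f \<kappa>"
  shows "Aff (2 * \<kappa> a - x) (f (2 * \<kappa> a - x + a) - b) \<in> unital_U f \<kappa>"
proof -
  define E where "E x = f (x + a) + \<kappa> (f (x + a)) - f (x + \<kappa> x)" for x
  have mem: "Aff x (f (x + a) - b) \<in> unital_U f \<kappa> \<longleftrightarrow> E x = b + \<kappa> b" for x
    by (auto simp: E_def kappa_diff algebra_simps)
  have expand: "E x = f a + f (\<kappa> a) + polar_form f x a + polar_form f (\<kappa> x) (\<kappa> a)
      - polar_form f x (\<kappa> x)" for x
    unfolding E_def polar_form_def kappa_add kappa_f by (simp add: algebra_simps)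
  have "E (2 * \<kappa> a - x) = E x"
    unfolding expand kappa_diff kappa_double kappa_kappa polar_form_diff_left polar_form_diff_right
      polar_form_double_left polar_form_double_right
    using polar_form_commute[of f a "\<kappa> a"] polar_form_commute[of f "\<kappa> x" "\<kappa> a"]
    by (simp add: algebra_simps)
  then show ?thesis using assms mem by simp
qed

lemma tangent_points_unital_U_subset:
  "tangent_points f (unital_U f \<kappa>) (Aff u v) \<subseteq> line_L f (\<kappa> u) (\<kappa> v)"
proof
  fix Q assume "Q \<in> tangent_points f (unital_U f \<kappa>) (Aff u v)"
  then obtain m where m: "m \<in> plane_lines f" "Aff u v \<in> m" "m \<inter> unital_U f \<kappa> = {Q}"
    unfolding tangent_points_def by blast
  from m(1) show "Q \<in> line_L f (\<kappa> u) (\<kappa> v)"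
  proof (cases rule: plane_linesE)
    case (1 a b)
    have v: "v = f (u + a) - b" using m(2) 1 by simp
    have "Q \<in> m \<inter> unital_U f \<kappa>" using m(3) by blast
    then obtain x where Q: "Q = Aff x (f (x + a) - b)" and QU: "Q \<in> unital_U f \<kappa>"
      using 1 by (cases Q) auto
    have "Aff (2 * \<kappa> a - x) (f (2 * \<kappa> a - x + a) - b) \<in> m \<inter> unital_U f \<kappa>"
      using line_L_unital_U_reflect QU Q 1 by simp
    then have "2 * \<kappa> a - x = x" using m(3) Q by auto
    then have "2 * (\<kappa> a - x) = 0" by (simp add: algebra_simps)
    then have x: "x = \<kappa> a" using two_neq_zero by simp
    have "f (\<kappa> a + a) - b + \<kappa> (f (\<kappa> a + a) - b) = f (\<kappa> a + a)"
      using QU Q x by (simp add: add.commute)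
    moreover have "\<kappa> (f (\<kappa> a + a)) = f (\<kappa> a + a)" by (simp add: kappa_f kappa_add add.commute)
    ultimately have "f (\<kappa> a + a) - b = \<kappa> b" by (simp add: kappa_diff algebra_simps)
    moreover have "f (\<kappa> a + \<kappa> u) - \<kappa> v = \<kappa> b"
      using v by (simp add: kappa_diff kappa_f kappa_add add.commute)
    ultimately show ?thesis using Q x by simp
  next
    case (2 a)
    obtain y where "y + \<kappa> y = f (u + \<kappa> u)" using unital_U_fibre by blast
    then have "{Inf None, Aff u y} \<subseteq> m \<inter> unital_U f \<kappa>" using m(2) 2 by simp
    then show ?thesis using m(3) by auto
  next
    case 3
    then show ?thesis using m(2) by simp
  qed
qed

lemma unital_U_tangent_points_collinear:
  "plane_collinear f (tangent_points f (unital_U f \<kappa>) (Aff u v))"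
  unfolding plane_collinear_def
  using line_L_in_plane_lines tangent_points_unital_U_subset by (rule bexI[rotated])

end

section \<open>The set U_\<theta>\<close>

context
  fixes q k :: nat and f :: "'a::field \<Rightarrow> 'a" and \<theta> :: 'a
  assumes prime_CHAR: "prime CHAR('a)" and q_eq: "q = CHAR('a) ^ k"
    and f_zero: "f 0 = 0"
    and f_theta_line_only_zero: "\<And>z t. t \<in> subfield_q q \<Longrightarrow> f z = t * \<theta> \<Longrightarrow> z = 0"
begin

lemma tangent_point_unital_U_theta:
  assumes "s \<in> subfield_q q" "f x - f w = s * \<theta>"
  shows "Aff (u - x) (f w - f x) \<in> tangent_points f (unital_U_theta q \<theta>) (Aff u (f w))"
proof -
  define m where "m = line_L f (x - u) (f x - f w)"
  have "m \<inter> unital_U_theta q \<theta> \<subseteq> {Aff (u - x) (f w - f x)}"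
  proof
    fix P assume P: "P \<in> m \<inter> unital_U_theta q \<theta>"
    then obtain y t where y: "P = Aff y (f (y + (x - u)) - (f x - f w))"
      and t: "t \<in> subfield_q q" "f (y + (x - u)) - (f x - f w) = t * \<theta>"
      by (cases P) (auto simp: m_def)
    have "f (y + (x - u)) = (t + s) * \<theta>" using t(2) assms(2) by (simp add: algebra_simps)
    then have "y + (x - u) = 0"
      using f_theta_line_only_zero subfield_q_add[OF prime_CHAR q_eq t(1) assms(1)] by blast
    then show "P \<in> {Aff (u - x) (f w - f x)}" using y f_zero by (simp add: algebra_simps)
  qed
  moreover have "f w - f x = (- s) * \<theta>" using assms(2) by (simp add: algebra_simps)
  then have "Aff (u - x) (f w - f x) \<in> unital_U_theta q \<theta>"
    using subfield_q_uminus[OF prime_CHAR q_eq assms(1)] mem_unital_U_theta by blast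
  moreover have "Aff (u - x) (f w - f x) \<in> m" using f_zero by (simp add: m_def)
  ultimately have "m \<inter> unital_U_theta q \<theta> = {Aff (u - x) (f w - f x)}" by blast
  moreover have "Aff u (f w) \<in> m" "m \<in> plane_lines f" by (simp_all add: m_def)
  ultimately show ?thesis unfolding tangent_points_def by blast
qed

lemma unital_U_theta_tangent_points_not_collinear:
  assumes planar: "planar f" and two: "(2::'a) \<noteq> 0" and even: "\<And>x. f (- x) = f x"
    and "w \<noteq> 0" and "s \<in> subfield_q q" "f x - f w = s * \<theta>" "x \<noteq> w" "x \<noteq> - w"
  shows "\<not> plane_collinear f (tangent_points f (unital_U_theta q \<theta>) (Aff u (f w)))"
proof
  assume "plane_collinear f (tangent_points f (unital_U_theta q \<theta>) (Aff u (f w)))"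
  then obtain l where l: "l \<in> plane_lines f"
    and sub: "tangent_points f (unital_U_theta q \<theta>) (Aff u (f w)) \<subseteq> l"
    unfolding plane_collinear_def by blast
  have on_l: "Aff (u - x') (f w - f x') \<in> l"
    if "s' \<in> subfield_q q" "f x' - f w = s' * \<theta>" for x' s'
    using sub tangent_point_unital_U_theta[OF that] by blast
  have P1: "Aff (u - w) 0 \<in> l"
    using on_l[of 0 w] subfield_q_zero[OF prime_CHAR q_eq] by simp
  have P2: "Aff (u + w) 0 \<in> l"
    using on_l[of 0 "- w"] subfield_q_zero[OF prime_CHAR q_eq] even[of w] by simp
  have P3: "Aff (u - x) (f w - f x) \<in> l"
    using on_l assms(5,6) by blast
  from l show False
  proof (cases rule: plane_linesE)
    case (1 a b)
    have "f (u - w + a) = b" "f (u + w + a) = b" using P1 P2 1 by simp_all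
    then have "f ((u + a) - w) = f ((u + a) + w)" by (simp add: algebra_simps)
    then have ua: "u + a = 0" using planar_even_centre[OF planar two even] \<open>w \<noteq> 0\<close> by blast
    have "u - w + a = - w" "u - x + a = - x" using ua by algebra+
    then have "f (u - w + a) = f w" "f (u - x + a) = f x" using even by metis+
    then have "b = f w" "f w - f x = f x - b"
      using \<open>f (u - w + a) = b\<close> P3 1 by simp_all
    then have "f x = f w" using two by simp
    then show False using planar_even_eqD[OF planar two even] assms(7,8) by blast
  next
    case (2 a)
    then have "u - w = u + w" using P1 P2 by simp
    then have "2 * w = 0" by algebra
    then show False using two \<open>w \<noteq> 0\<close> by simp
  next
    case 3
    then show False using P1 by simp
  qed
qed

end

locale theta_setting = DO_function p f for p and f :: "'a::field \<Rightarrow> 'a" +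
  fixes q k :: nat and \<xi> \<theta> \<theta>0 \<theta>1 :: 'a and f0 f1 :: "'a \<Rightarrow> 'a"
  assumes q_eq: "q = p ^ k" and k_pos: "k \<ge> 1" and planar: "planar f"
    and xi: "\<xi> \<notin> subfield_q q"
    and f_comp: "\<And>x. f0 x \<in> subfield_q q \<and> f1 x \<in> subfield_q q \<and> f x = f0 x + f1 x * \<xi>"
    and theta_nz: "\<theta> \<noteq> 0"
    and theta_comp: "\<theta>0 \<in> subfield_q q" "\<theta>1 \<in> subfield_q q" "\<theta> = \<theta>0 + \<theta>1 * \<xi>"
    and theta_cond: "\<And>c. c \<in> subfield_q q \<Longrightarrow>
        card {x. \<theta>1 * f0 x - \<theta>0 * f1 x = c} = (if c \<noteq> 0 then q + 1 else 1)"
begin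

lemma prime_CHAR: "prime CHAR('a)"
  using prime_p CHAR_eq by simp

lemma q_eq_CHAR: "q = CHAR('a) ^ k"
  using q_eq CHAR_eq by simp

lemma q_ge_2: "q \<ge> 2"
proof -
  have "p ^ 1 \<le> p ^ k" using k_pos prime_gt_0_nat[OF prime_p] by (intro power_increasing) auto
  then show ?thesis using q_eq prime_ge_2_nat[OF prime_p] by simp
qed

definition theta_form :: "'a \<Rightarrow> 'a" where
  "theta_form x = \<theta>1 * f0 x - \<theta>0 * f1 x"

lemma theta_form_in_subfield_q: "theta_form x \<in> subfield_q q"
  using f_comp[of x] theta_comp(1,2)
  by (simp add: theta_form_def subfield_q_diff[OF prime_CHAR q_eq_CHAR] subfield_q_mult)

lemma f_diff_theta_multiple_iff:
  "(\<exists>s\<in>subfield_q q. f x - f w = s * \<theta>) \<longleftrightarrow> theta_form x = theta_form w"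
proof -
  have "f x - f w = (f0 x - f0 w) + (f1 x - f1 w) * \<xi>"
    using f_comp[of x] f_comp[of w] by (simp add: algebra_simps)
  moreover have "f0 x - f0 w \<in> subfield_q q" "f1 x - f1 w \<in> subfield_q q"
    using f_comp[of x] f_comp[of w] subfield_q_diff[OF prime_CHAR q_eq_CHAR] by blast+
  ultimately have "(\<exists>s\<in>subfield_q q. f x - f w = s * \<theta>)
      \<longleftrightarrow> \<theta>1 * (f0 x - f0 w) = \<theta>0 * (f1 x - f1 w)"
    using subfield_q_multiple_iff[OF prime_CHAR q_eq_CHAR xi _ _ theta_comp(1,2)] theta_nz theta_comp(3)
    by simp
  then show ?thesis by (simp add: theta_form_def algebra_simps)
qed

lemma theta_form_zero: "theta_form 0 = 0"
proof -
  have "f0 0 + f1 0 * \<xi> = 0 + 0 * \<xi>" using f_comp[of 0] by simp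
  then have "f0 0 = 0" "f1 0 = 0"
    using subfield_q_coordinates_unique[OF prime_CHAR q_eq_CHAR xi]
      f_comp[of 0] subfield_q_zero[OF prime_CHAR q_eq_CHAR] by blast+
  then show ?thesis by (simp add: theta_form_def)
qed

lemma theta_form_eq_0_iff: "theta_form z = 0 \<longleftrightarrow> z = 0"
proof -
  have "card {x. theta_form x = 0} = 1"
    using theta_cond[OF subfield_q_zero[OF prime_CHAR q_eq_CHAR]] by (simp add: theta_form_def)
  then have "{x. theta_form x = 0} = {0}"
    using theta_form_zero by (metis (mono_tags) card_1_singletonE mem_Collect_eq singletonD)
  then show ?thesis by blast
qed

lemma f_theta_multiple_only_zero:
  assumes "t \<in> subfield_q q" "f z = t * \<theta>"
  shows "z = 0"
proof -
  have "theta_form z = theta_form 0"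
    using f_diff_theta_multiple_iff[of z 0] assms by auto
  then show ?thesis using theta_form_zero theta_form_eq_0_iff by simp
qed

lemma theta_class_third_point:
  assumes "w \<noteq> 0"
  obtains x s where "s \<in> subfield_q q" "f x - f w = s * \<theta>" "x \<noteq> w" "x \<noteq> - w"
proof -
  have "theta_form w \<noteq> 0" using assms theta_form_eq_0_iff by simp
  then have "card {x. theta_form x = theta_form w} = q + 1"
    using theta_cond[OF theta_form_in_subfield_q[of w]] by (simp add: theta_form_def)
  moreover have "card {w, - w} \<le> 2" by (simp add: card_insert_if)
  ultimately have "\<not> {x. theta_form x = theta_form w} \<subseteq> {w, - w}"
    using q_ge_2 card_mono[of "{w, - w}" "{x. theta_form x = theta_form w}"] by auto
  then obtain x where "theta_form x = theta_form w" "x \<noteq> w" "x \<noteq> - w" by blast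
  then show ?thesis using f_diff_theta_multiple_iff that by blast
qed

lemma unital_U_theta_not_collinear:
  assumes "w \<noteq> 0"
  shows "\<not> plane_collinear f (tangent_points f (unital_U_theta q \<theta>) (Aff u (f w)))"
proof -
  obtain x s where third: "s \<in> subfield_q q" "f x - f w = s * \<theta>" "x \<noteq> w" "x \<noteq> - w"
    using theta_class_third_point[OF assms] .
  have only_zero: "\<And>z t. t \<in> subfield_q q \<Longrightarrow> f z = t * \<theta> \<Longrightarrow> z = 0"
    by (rule f_theta_multiple_only_zero)
  show ?thesis
    by (rule unital_U_theta_tangent_points_not_collinear[OF prime_CHAR q_eq_CHAR f_zero only_zero
          planar two_neq_zero f_uminus assms third])
qed

end

theorem theorem4p2:
  fixes f \<kappa> f0 f1 :: "'a::{field,finite} \<Rightarrow> 'a"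
    and p q k :: nat and \<xi> \<theta> \<theta>0 \<theta>1 :: 'a
  assumes p_prime: "prime p" and p_odd: "odd p"
    and char_p: "of_nat p = (0::'a)"
    and q_def: "q = p ^ k" and k_pos: "k \<ge> 1"
    and card: "card (UNIV :: 'a set) = q ^ 2"
    and DO: "DO_poly p f"
    and planar: "planar f"
    and kappa_add: "\<And>x y. \<kappa> (x + y) = \<kappa> x + \<kappa> y"
    and kappa_inv: "\<And>x. \<kappa> (\<kappa> x) = x"
    and kappa_f: "\<And>x. \<kappa> (f x) = f (\<kappa> x)"
    and kappa_card: "\<And>x. card {y. y + \<kappa> y = f (x + \<kappa> x)} = q"
    and xi: "\<xi> \<notin> subfield_q q"
    and f_comp: "\<And>x. f0 x \<in> subfield_q q \<and> f1 x \<in> subfield_q q \<and> f x = f0 x + f1 x * \<xi>"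
    and theta_nz: "\<theta> \<noteq> 0"
    and theta_comp: "\<theta>0 \<in> subfield_q q" "\<theta>1 \<in> subfield_q q" "\<theta> = \<theta>0 + \<theta>1 * \<xi>"
    and theta_cond: "\<And>c. c \<in> subfield_q q \<Longrightarrow>
        card {x. \<theta>1 * f0 x - \<theta>0 * f1 x = c} = (if c \<noteq> 0 then q + 1 else 1)"
  shows "\<not> (\<exists>\<phi>. collineation f \<phi> \<and> \<phi> ` unital_U_theta q \<theta> = unital_U f \<kappa>)"
proof -
  have CHAR: "CHAR('a) = p" by (rule CHAR_eq_prime[OF p_prime char_p])
  have "q \<noteq> 0" using q_def prime_gt_0_nat[OF p_prime] by simp
  then have fibre: "\<exists>y. y + \<kappa> y = f (x + \<kappa> x)" for x
    using kappa_card[of x] by - (rule ccontr, simp)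
  interpret hermitian_DO p f \<kappa>
    by unfold_locales (fact p_prime p_odd CHAR DO kappa_add kappa_inv kappa_f fibre)+
  interpret theta_setting p f q k \<xi> \<theta> \<theta>0 \<theta>1 f0 f1
    by unfold_locales (fact q_def k_pos planar xi f_comp theta_nz theta_comp theta_cond)+
  have q_sq: "(2::nat) ^ 2 \<le> q ^ 2" using q_ge_2 by (rule power_mono) simp
  moreover have "card {0, 1, - 1 :: 'a} \<le> 3" using card_length[of "[0, 1, - 1 :: 'a]"] by simp
  ultimately have "\<not> (UNIV :: 'a set) \<subseteq> {0, 1, - 1}"
    using card card_mono[of "{0, 1, - 1 :: 'a}" UNIV] by auto
  then obtain w :: 'a where w: "w \<notin> {0, 1, - 1}" by blast
  then have "f 1 \<noteq> f w" using planar_even_eqD[OF planar two_neq_zero f_uminus, of 1 w]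
    by (auto simp: minus_equation_iff)
  show ?thesis
  proof (rule no_collineation_onto[where A = "(\<lambda>(u, y). Aff u y) ` (UNIV \<times> {f 1, f w})"])
    show "plane_collinear f (tangent_points f (unital_U f \<kappa>) (Aff u v))" for u v
      by (rule unital_U_tangent_points_collinear)
    show "\<not> plane_collinear f (tangent_points f (unital_U_theta q \<theta>) P)"
      if "P \<in> (\<lambda>(u, y). Aff u y) ` (UNIV \<times> {f 1, f w})" for P
      using that w unital_U_theta_not_collinear by auto
    show "Suc CARD('a) < card ((\<lambda>(u, y). Aff u y) ` (UNIV \<times> {f 1, f w}))"
      using card_Aff_two_rows[OF \<open>f 1 \<noteq> f w\<close>] card q_sq by simp
  qed
qed

end
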